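(* For every $n>1$ there are finite symmetric $\mathcal L_n$-structures $\mathcal X=\langle X;X_1,\dots,X_n\rangle$ and $\mathcal Y=\langle Y;Y_1,\dots,Y_n\rangle$ such that $\mathcal X$ and $\mathcal Y$ are not isomorphic, but their reducts $\langle X;X_1,\dots,X_{n-1}\rangle$ and $\langle Y;Y_1,\dots,Y_{n-1}\rangle$ to $\mathcal L_{n-1}$ are isomorphic.
   Context: For $n\in\mathbb N$, $\mathcal L_n$ is the first-order language $\{P_1,\dots,P_n\}$ of $n$ unary predicates ($\mathcal L_0$ is the language of pure equality). An $\mathcal L_n$-structure $\mathcal F=\langle F;F_1,\dots,F_n\rangle$ has $F_i$ the interpretation of $P_i$. For $n>1$, $\mathcal F$ is symmetric if for every permutation $\sigma\in\mathfrak S_n$ the structure $\mathcal F$ is isomorphic to $\langle F;F_{\sigma(1)},\dots,F_{\sigma(n)}\rangle$, i.e. there is a bijection $\tilde\sigma:F\to F$ with $\gamma\in F_i$ iff $\tilde\sigma(\gamma)\in F_{\sigma(i)}$. *)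

theory Defs
  imports "HOL-Combinatorics.Permutations"
begin

text \<open>An L_n-structure is represented by a carrier set F and a family of
unary predicates P :: nat => 'a set, where P i (for 1 <= i <= n) interprets P_i
and must be a subset of F. Values of P outside {1..n} are irrelevant.\<close>

definition ln_structure :: "nat \<Rightarrow> 'a set \<Rightarrow> (nat \<Rightarrow> 'a set) \<Rightarrow> bool" where
  "ln_structure n F P \<longleftrightarrow> (\<forall>i\<in>{1..n}. P i \<subseteq> F)"

definition ln_iso :: "nat \<Rightarrow> 'a set \<Rightarrow> (nat \<Rightarrow> 'a set) \<Rightarrow> 'b set \<Rightarrow> (nat \<Rightarrow> 'b set) \<Rightarrow> bool" where
  "ln_iso n F P G Q \<longleftrightarrow>
     (\<exists>f. bij_betw f F G \<and> (\<forall>i\<in>{1..n}. \<forall>x\<in>F. x \<in> P i \<longleftrightarrow> f x \<in> Q i))"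

definition ln_symmetric :: "nat \<Rightarrow> 'a set \<Rightarrow> (nat \<Rightarrow> 'a set) \<Rightarrow> bool" where
  "ln_symmetric n F P \<longleftrightarrow>
     (\<forall>\<sigma>. \<sigma> permutes {1..n} \<longrightarrow> ln_iso n F P F (\<lambda>i. P (\<sigma> i)))"

end

theory Submission
  imports Defs
begin

text \<open>Take for \<open>\<X>\<close> the subsets of \<open>{1..n}\<close> of even size and for \<open>\<Y>\<close> those of odd size, with
  \<open>S \<in> X\<^sub>i\<close> iff \<open>i \<in> S\<close>. Both are symmetric since permutations of \<open>{1..n}\<close> act on them.
  They are not isomorphic: the empty set lies in no \<open>X\<^sub>i\<close>, whereas every odd set lies in some \<open>Y\<^sub>i\<close>.
  Toggling the element \<open>n\<close> flips the parity and preserves membership of every \<open>i < n\<close>,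
  so the reducts to the first \<open>n - 1\<close> predicates are isomorphic.\<close>

lemma ln_iso_sym:
  assumes "ln_iso n F P G Q"
  shows "ln_iso n G Q F P"
proof -
  obtain f where f: "bij_betw f F G" and pres: "\<forall>i\<in>{1..n}. \<forall>x\<in>F. x \<in> P i \<longleftrightarrow> f x \<in> Q i"
    using assms unfolding ln_iso_def by blast
  have inv: "bij_betw (inv_into F f) G F"
    using f by (rule bij_betw_inv_into)
  have "\<forall>i\<in>{1..n}. \<forall>y\<in>G. y \<in> Q i \<longleftrightarrow> inv_into F f y \<in> P i"
  proof (intro ballI)
    fix i y assume "i \<in> {1..n}" "y \<in> G"
    moreover have "inv_into F f y \<in> F" and "f (inv_into F f y) = y"
      using f \<open>y \<in> G\<close> by (auto simp: bij_betw_def inv_into_into f_inv_into_f)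
    ultimately show "y \<in> Q i \<longleftrightarrow> inv_into F f y \<in> P i"
      using pres by metis
  qed
  with inv show ?thesis
    unfolding ln_iso_def by blast
qed

lemma ln_iso_trans [trans]:
  assumes "ln_iso n F P G Q" and "ln_iso n G Q H R"
  shows "ln_iso n F P H R"
proof -
  obtain f where f: "bij_betw f F G" "\<forall>i\<in>{1..n}. \<forall>x\<in>F. x \<in> P i \<longleftrightarrow> f x \<in> Q i"
    using assms(1) unfolding ln_iso_def by blast
  obtain g where g: "bij_betw g G H" "\<forall>i\<in>{1..n}. \<forall>x\<in>G. x \<in> Q i \<longleftrightarrow> g x \<in> R i"
    using assms(2) unfolding ln_iso_def by blast
  have "bij_betw (g \<circ> f) F H"
    using f(1) g(1) by (rule bij_betw_trans)
  moreover have "\<forall>i\<in>{1..n}. \<forall>x\<in>F. x \<in> P i \<longleftrightarrow> (g \<circ> f) x \<in> R i"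
    using f g by (metis bij_betwE comp_apply)
  ultimately show ?thesis
    unfolding ln_iso_def by blast
qed

lemma ln_iso_permute:
  assumes "ln_iso n F P G Q" and "\<sigma> permutes {1..n}"
  shows "ln_iso n F (\<lambda>i. P (\<sigma> i)) G (\<lambda>i. Q (\<sigma> i))"
  using assms unfolding ln_iso_def by (meson permutes_in_image)

lemma ln_symmetric_iso:
  assumes "ln_iso n F P G Q" and "ln_symmetric n F P"
  shows "ln_symmetric n G Q"
  unfolding ln_symmetric_def
proof (intro allI impI)
  fix \<sigma> assume \<sigma>: "\<sigma> permutes {1..n}"
  have "ln_iso n G Q F P"
    using assms(1) by (rule ln_iso_sym)
  also have "ln_iso n F P F (\<lambda>i. P (\<sigma> i))"
    using assms(2) \<sigma> unfolding ln_symmetric_def by blast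
  also have "ln_iso n F (\<lambda>i. P (\<sigma> i)) G (\<lambda>i. Q (\<sigma> i))"
    using assms(1) \<sigma> by (rule ln_iso_permute)
  finally show "ln_iso n G Q G (\<lambda>i. Q (\<sigma> i))" .
qed

lemma finite_ln_structure_nat_copy:
  fixes F :: "'a set"
  assumes "finite F"
  obtains X :: "nat set" and XP where "finite X" "ln_structure n X XP" "\<And>m. ln_iso m F P X XP"
proof -
  obtain g :: "'a \<Rightarrow> nat" where g: "inj_on g F"
    using finite_imp_inj_to_nat_seg[OF assms] by blast
  have "ln_iso m F P (g ` F) (\<lambda>i. g ` (P i \<inter> F))" for m
  proof -
    have "bij_betw g F (g ` F)"
      using g by (rule inj_on_imp_bij_betw)
    moreover have "\<forall>i\<in>{1..m}. \<forall>x\<in>F. x \<in> P i \<longleftrightarrow> g x \<in> g ` (P i \<inter> F)"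
      using g by (auto simp: inj_on_def)
    ultimately show ?thesis
      unfolding ln_iso_def by blast
  qed
  moreover have "ln_structure n (g ` F) (\<lambda>i. g ` (P i \<inter> F))"
    unfolding ln_structure_def by auto
  ultimately show ?thesis
    using that assms by blast
qed

definition subsets_with_card :: "nat \<Rightarrow> (nat \<Rightarrow> bool) \<Rightarrow> nat set set" where
  "subsets_with_card n C = {S. S \<subseteq> {1..n} \<and> C (card S)}"

definition member_preds :: "'a set set \<Rightarrow> 'a \<Rightarrow> 'a set set" where
  "member_preds A i = {S \<in> A. i \<in> S}"

lemma finite_subsets_with_card: "finite (subsets_with_card n C)"
  unfolding subsets_with_card_def by (rule finite_subset[of _ "Pow {1..n}"]) auto

lemma image_permutes_subsets_with_card:
  assumes "\<sigma> permutes {1..n}" and "S \<in> subsets_with_card n C"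
  shows "\<sigma> ` S \<in> subsets_with_card n C"
proof -
  have "card (\<sigma> ` S) = card S"
    using permutes_inj[OF assms(1)] by (simp add: card_image inj_on_subset)
  moreover have "\<sigma> ` S \<subseteq> {1..n}"
    using assms permutes_image[OF assms(1)] unfolding subsets_with_card_def by blast
  ultimately show ?thesis
    using assms(2) unfolding subsets_with_card_def by simp
qed

lemma ln_symmetric_subsets_with_card:
  fixes n :: nat and C :: "nat \<Rightarrow> bool"
  defines "A \<equiv> subsets_with_card n C"
  shows "ln_symmetric n A (member_preds A)"
  unfolding ln_symmetric_def
proof (intro allI impI)
  fix \<sigma> assume \<sigma>: "\<sigma> permutes {1..n}"
  have \<sigma>': "inv \<sigma> permutes {1..n}"
    using \<sigma> by (rule permutes_inv)
  have "bij_betw ((`) \<sigma>) A A"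
  proof (rule bij_betw_byWitness[where f' = "(`) (inv \<sigma>)"])
    show "\<forall>S\<in>A. inv \<sigma> ` \<sigma> ` S = S" "\<forall>S\<in>A. \<sigma> ` inv \<sigma> ` S = S"
      by (simp_all add: image_comp permutes_inverses[OF \<sigma>])
    show "(`) \<sigma> ` A \<subseteq> A" "(`) (inv \<sigma>) ` A \<subseteq> A"
      using image_permutes_subsets_with_card[OF \<sigma>] image_permutes_subsets_with_card[OF \<sigma>']
      unfolding A_def by blast+
  qed
  moreover have "\<forall>i\<in>{1..n}. \<forall>S\<in>A. S \<in> member_preds A i \<longleftrightarrow> \<sigma> ` S \<in> member_preds A (\<sigma> i)"
    using \<open>bij_betw ((`) \<sigma>) A A\<close> permutes_inj[OF \<sigma>]
    by (auto simp: member_preds_def inj_image_mem_iff bij_betwE)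
  ultimately show "ln_iso n A (member_preds A) A (\<lambda>i. member_preds A (\<sigma> i))"
    unfolding ln_iso_def by blast
qed

lemma not_ln_iso_even_odd_subsets:
  fixes n :: nat
  defines "Ev \<equiv> subsets_with_card n even" and "Od \<equiv> subsets_with_card n odd"
  shows "\<not> ln_iso n Ev (member_preds Ev) Od (member_preds Od)"
proof
  assume "ln_iso n Ev (member_preds Ev) Od (member_preds Od)"
  then obtain f where f: "bij_betw f Ev Od"
    and pres: "\<forall>i\<in>{1..n}. \<forall>S\<in>Ev. S \<in> member_preds Ev i \<longleftrightarrow> f S \<in> member_preds Od i"
    unfolding ln_iso_def by blast
  have "{} \<in> Ev"
    unfolding Ev_def subsets_with_card_def by simp
  then have "f {} \<in> Od"
    using f bij_betwE by blast
  then have "f {} \<subseteq> {1..n}" and "f {} \<noteq> {}"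
    unfolding Od_def subsets_with_card_def by auto
  then obtain i where "i \<in> {1..n}" "i \<in> f {}"
    by blast
  with \<open>f {} \<in> Od\<close> have "f {} \<in> member_preds Od i"
    unfolding member_preds_def by blast
  with pres \<open>i \<in> {1..n}\<close> \<open>{} \<in> Ev\<close> have "{} \<in> member_preds Ev i"
    by blast
  then show False
    unfolding member_preds_def by blast
qed

definition toggle :: "'a \<Rightarrow> 'a set \<Rightarrow> 'a set" where
  "toggle a S = (if a \<in> S then S - {a} else insert a S)"

lemma toggle_toggle [simp]: "toggle a (toggle a S) = S"
  unfolding toggle_def by auto

lemma toggle_mem_iff [simp]: "i \<noteq> a \<Longrightarrow> i \<in> toggle a S \<longleftrightarrow> i \<in> S"
  unfolding toggle_def by auto

lemma even_card_toggle:
  assumes "finite S"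
  shows "even (card (toggle a S)) \<longleftrightarrow> odd (card S)"
proof (cases "a \<in> S")
  case True
  then have "card S = Suc (card (S - {a}))"
    using assms by (metis card_Suc_Diff1)
  with True show ?thesis
    unfolding toggle_def by simp
qed (use assms in \<open>simp add: toggle_def\<close>)

lemma bij_betw_toggle_even_odd_subsets:
  assumes "a \<in> {1..n}"
  shows "bij_betw (toggle a) (subsets_with_card n even) (subsets_with_card n odd)"
proof -
  have toggle_subset: "toggle a S \<subseteq> {1..n}" if "S \<subseteq> {1..n}" for S
    using assms that unfolding toggle_def by auto
  have parity: "even (card (toggle a S)) \<longleftrightarrow> odd (card S)" if "S \<subseteq> {1..n}" for S
    using that by (intro even_card_toggle) (rule finite_subset, auto)
  have "toggle a S \<in> subsets_with_card n odd" if "S \<in> subsets_with_card n even" for S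
    using that toggle_subset parity unfolding subsets_with_card_def by auto
  moreover have "toggle a S \<in> subsets_with_card n even" if "S \<in> subsets_with_card n odd" for S
    using that toggle_subset parity unfolding subsets_with_card_def by auto
  ultimately show ?thesis
    by (intro bij_betw_byWitness[where f' = "toggle a"]) auto
qed

lemma ln_iso_reduct_even_odd_subsets:
  fixes n :: nat
  assumes "n > 0"
  defines "Ev \<equiv> subsets_with_card n even" and "Od \<equiv> subsets_with_card n odd"
  shows "ln_iso (n - 1) Ev (member_preds Ev) Od (member_preds Od)"
proof -
  have bij: "bij_betw (toggle n) Ev Od"
    using assms by (auto intro: bij_betw_toggle_even_odd_subsets)
  have "\<forall>i\<in>{1..n - 1}. \<forall>S\<in>Ev. S \<in> member_preds Ev i \<longleftrightarrow> toggle n S \<in> member_preds Od i"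
    using bij by (auto simp: member_preds_def bij_betwE)
  with bij show ?thesis
    unfolding ln_iso_def by blast
qed

theorem lemma5p6:
  fixes n :: nat
  assumes "n > 1"
  shows "\<exists>(X :: nat set) XP (Y :: nat set) YP.
           finite X \<and> finite Y \<and>
           ln_structure n X XP \<and> ln_structure n Y YP \<and>
           ln_symmetric n X XP \<and> ln_symmetric n Y YP \<and>
           \<not> ln_iso n X XP Y YP \<and>
           ln_iso (n - 1) X XP Y YP"
proof -
  define Ev where "Ev = subsets_with_card n even"
  define Od where "Od = subsets_with_card n odd"
  obtain X :: "nat set" and XP
    where X: "finite X" "ln_structure n X XP" "\<And>m. ln_iso m Ev (member_preds Ev) X XP"
    unfolding Ev_def by (metis finite_ln_structure_nat_copy finite_subsets_with_card)
  obtain Y :: "nat set" and YP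
    where Y: "finite Y" "ln_structure n Y YP" "\<And>m. ln_iso m Od (member_preds Od) Y YP"
    unfolding Od_def by (metis finite_ln_structure_nat_copy finite_subsets_with_card)
  have "ln_symmetric n X XP" "ln_symmetric n Y YP"
    using ln_symmetric_iso X(3) Y(3) ln_symmetric_subsets_with_card unfolding Ev_def Od_def by blast+
  moreover have "\<not> ln_iso n X XP Y YP"
    using not_ln_iso_even_odd_subsets[of n] ln_iso_trans[OF ln_iso_trans[OF X(3)] ln_iso_sym[OF Y(3)]]
    unfolding Ev_def Od_def by auto
  moreover have "ln_iso (n - 1) X XP Y YP"
    using ln_iso_trans[OF ln_iso_trans[OF ln_iso_sym[OF X(3)]] Y(3)]
      ln_iso_reduct_even_odd_subsets[of n] assms unfolding Ev_def Od_def by auto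
  ultimately show ?thesis
    using X Y by blast
qed

end
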